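(* Let $\mathbf{G}\in\mathbb{C}^{N_s\times N_t}$, $\mathbf{U}_k\in\mathbb{C}^{N_r\times N_s}$, $\mathbf{D}_k\in\mathbb{C}^{N_r\times N_t}$ for $k=1,\dots,K$, let $\mathbf{W}_k\in\mathbb{C}^{N_t\times N_d}$ be fixed, $\sigma_0^2>0$, and weights $\omega_k$. For $\boldsymbol{\theta}\in\mathbb{C}^{N_s}$ let $\mathbf{H}_k(\boldsymbol{\theta})=\mathbf{D}_k+\mathbf{U}_k\mathrm{diag}(\boldsymbol{\theta})\mathbf{G}$, $\bar{\mathbf{W}}=\sum_{j=1}^K\mathbf{W}_j\mathbf{W}_j^{\mathsf H}$, $\bar{\mathbf{W}}_k=\sum_{j\neq k}\mathbf{W}_j\mathbf{W}_j^{\mathsf H}$, and $$R(\boldsymbol{\theta})=\sum_{k=1}^K\omega_k\Big[\log\det(\sigma_0^2\mathbf{I}+\mathbf{H}_k\bar{\mathbf{W}}\mathbf{H}_k^{\mathsf H})-\log\det(\sigma_0^2\mathbf{I}+\mathbf{H}_k\bar{\mathbf{W}}_k\mathbf{H}_k^{\mathsf H})\Big],$$ with $\mathbf{H}_k=\mathbf{H}_k(\boldsymbol{\theta})$. Then $$\nabla_{\boldsymbol{\theta}}R(\boldsymbol{\theta})=\sum_{k=1}^K\omega_k\Big(\mathrm{vecd}\big(\mathbf{U}_k^{\mathsf H}(\mathbf{H}_k\bar{\mathbf{W}}\mathbf{H}_k^{\mathsf H}+\sigma_0^2\mathbf{I})^{-1}\mathbf{H}_k\bar{\mathbf{W}}\mathbf{G}^{\mathsf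 H}\big)-\mathrm{vecd}\big(\mathbf{U}_k^{\mathsf H}(\mathbf{H}_k\bar{\mathbf{W}}_k\mathbf{H}_k^{\mathsf H}+\sigma_0^2\mathbf{I})^{-1}\mathbf{H}_k\bar{\mathbf{W}}_k\mathbf{G}^{\mathsf H}\big)\Big).$$
   Context: $\mathrm{diag}(\boldsymbol{\theta})$ is the diagonal matrix with diagonal $\boldsymbol{\theta}$; $\mathrm{vecd}(\mathbf{X})$ is the vector of diagonal entries of a square matrix $\mathbf{X}$; $\log$ is the natural logarithm. The complex-valued gradient of a real function $f$ is $\nabla_{\boldsymbol{\theta}}f=\frac12\big(\frac{\partial f}{\partial\Re\{\boldsymbol{\theta}\}}+j\frac{\partial f}{\partial\Im\{\boldsymbol{\theta}\}}\big)$. $R$ is the weighted sum rate of an RIS-aided downlink multiuser MIMO system with RIS phase-shift vector $\boldsymbol{\theta}$ and fixed precoders. *)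

theory Defs
  imports "HOL-Analysis.Analysis"
begin

definition hconj :: "complex^'n^'m \<Rightarrow> complex^'m^'n" where
  "hconj A = (\<chi> i j. cnj (A $ j $ i))"

definition cdiag :: "complex^'n \<Rightarrow> complex^'n^'n" where
  "cdiag \<theta> = (\<chi> i j. if i = j then \<theta> $ i else 0)"

definition vecd :: "complex^'n^'n \<Rightarrow> complex^'n" where
  "vecd X = (\<chi> i. X $ i $ i)"

definition has_complex_gradient ::
  "(complex^'n \<Rightarrow> real) \<Rightarrow> complex^'n \<Rightarrow> complex^'n \<Rightarrow> bool" where
  "has_complex_gradient f g \<theta> \<longleftrightarrow>
     (\<forall>i. \<exists>a b.
        ((\<lambda>t. f (\<theta> + (complex_of_real t) *s axis i 1)) has_real_derivative a) (at 0) \<and>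
        ((\<lambda>t. f (\<theta> + (\<i> * complex_of_real t) *s axis i 1)) has_real_derivative b) (at 0) \<and>
        g $ i = Complex a b / 2)"

definition chan :: "complex^'nt^'nr \<Rightarrow> complex^'ns^'nr \<Rightarrow> complex^'nt^'ns
                     \<Rightarrow> complex^'ns \<Rightarrow> complex^'nt^'nr" where
  "chan D U G \<theta> = D + U ** cdiag \<theta> ** G"

definition Wbar :: "('k::finite \<Rightarrow> complex^'nd^'nt) \<Rightarrow> complex^'nt^'nt" where
  "Wbar W = (\<Sum>j\<in>UNIV. W j ** hconj (W j))"

definition Wbar_ex :: "('k::finite \<Rightarrow> complex^'nd^'nt) \<Rightarrow> 'k \<Rightarrow> complex^'nt^'nt" where
  "Wbar_ex W k = (\<Sum>j\<in>UNIV - {k}. W j ** hconj (W j))"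

text \<open>log det of a Hermitian positive definite matrix (its determinant is a
  positive real number), natural logarithm.\<close>
definition logdet :: "complex^'n^'n \<Rightarrow> real" where
  "logdet M = ln (Re (det M))"

definition wsr :: "('k::finite \<Rightarrow> real) \<Rightarrow> real \<Rightarrow> complex^'nt^'ns
    \<Rightarrow> ('k \<Rightarrow> complex^'ns^'nr) \<Rightarrow> ('k \<Rightarrow> complex^'nt^'nr)
    \<Rightarrow> ('k \<Rightarrow> complex^'nd^'nt) \<Rightarrow> complex^'ns \<Rightarrow> real" where
  "wsr \<omega> \<sigma>2 G U D W \<theta> =
     (\<Sum>k\<in>UNIV. \<omega> k *
        (logdet (mat (complex_of_real \<sigma>2)
                 + chan (D k) (U k) G \<theta> ** Wbar W ** hconj (chan (D k) (U k) G \<theta>))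
       - logdet (mat (complex_of_real \<sigma>2)
                 + chan (D k) (U k) G \<theta> ** Wbar_ex W k ** hconj (chan (D k) (U k) G \<theta>))))"

end

theory Submission
  imports Defs
begin

(* Along a real line theta + t v the channel is affine in t, so every covariance
   sigma^2 I + H W H^H becomes a quadratic matrix polynomial A + t B + t^2 C. Jacobi's
   formula gives d/dt log det = Re tr(A^-1 B), and as A^-1 and W are Hermitian this trace
   equals 2 Re <v, vecd(U^H A^-1 H W G^H)>. A real function whose directional derivatives
   have the form 2 Re <v, g> has complex gradient g (take v = e_i and v = j e_i).
   The logarithm is differentiable because det A > 0: s |-> det(sigma^2 I + s P) is real,
   continuous and nonzero on [0, 1] for Hermitian positive semidefinite P. *)

lemma matrix_inv_right:
  fixes A :: "'a::semiring_1^'n^'m"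
  assumes "invertible A"
  shows "A ** matrix_inv A = mat 1"
  using someI_ex[OF assms[unfolded invertible_def]] by (simp add: matrix_inv_def)

lemma matrix_inv_left:
  fixes A :: "'a::semiring_1^'n^'m"
  assumes "invertible A"
  shows "matrix_inv A ** A = mat 1"
  using someI_ex[OF assms[unfolded invertible_def]] by (simp add: matrix_inv_def)

lemma trace_scaleR:
  fixes A :: "'a::real_algebra_1^'n^'n"
  shows "trace (r *\<^sub>R A) = r *\<^sub>R trace A"
  by (simp add: trace_def scaleR_sum_right)

lemma hconj_hconj [simp]: "hconj (hconj A) = A"
  by (simp add: hconj_def vec_eq_iff)

lemma hconj_zero [simp]: "hconj 0 = 0"
  by (simp add: hconj_def vec_eq_iff)

lemma hconj_add: "hconj (A + B) = hconj A + hconj B"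
  by (simp add: hconj_def vec_eq_iff)

lemma hconj_sum: "hconj (\<Sum>j\<in>S. A j) = (\<Sum>j\<in>S. hconj (A j))"
  by (induction S rule: infinite_finite_induct) (simp_all add: hconj_add)

lemma hconj_scaleR: "hconj (r *\<^sub>R A) = r *\<^sub>R hconj A"
  by (simp add: hconj_def vec_eq_iff)

lemma hconj_mat: "hconj (mat c) = mat (cnj c)"
  by (simp add: hconj_def vec_eq_iff mat_def)

lemma hconj_matrix_mult: "hconj (A ** B) = hconj B ** hconj A"
  by (simp add: hconj_def vec_eq_iff matrix_matrix_mult_def cnj_sum mult.commute)

lemma trace_hconj: "trace (hconj A) = cnj (trace A)"
  by (simp add: hconj_def trace_def cnj_sum)

lemma det_hconj: "det (hconj A) = cnj (det A)"
proof -
  have "hconj A = transpose (\<chi> i j. cnj (A $ i $ j))"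
    by (simp add: hconj_def transpose_def vec_eq_iff)
  then have "det (hconj A) = det (\<chi> i j. cnj (A $ i $ j))"
    by (simp only: det_transpose)
  then show ?thesis
    by (simp add: det_def cnj_sum cnj_prod)
qed

definition cinner :: "complex^'n \<Rightarrow> complex^'n \<Rightarrow> complex" where
  "cinner x y = (\<Sum>i\<in>UNIV. cnj (x $ i) * y $ i)"

lemma cinner_adjoint: "cinner x (M *v y) = cinner (hconj M *v x) y"
proof -
  have "cinner x (M *v y) = (\<Sum>i\<in>UNIV. \<Sum>j\<in>UNIV. cnj (x $ i) * M $ i $ j * y $ j)"
    by (simp add: cinner_def matrix_vector_mult_def sum_distrib_left mult.assoc)
  also have "\<dots> = (\<Sum>j\<in>UNIV. \<Sum>i\<in>UNIV. cnj (x $ i) * M $ i $ j * y $ j)"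
    by (rule sum.swap)
  also have "\<dots> = cinner (hconj M *v x) y"
    by (simp add: cinner_def matrix_vector_mult_def hconj_def cnj_sum sum_distrib_right
        sum_distrib_left mult_ac)
  finally show ?thesis .
qed

lemma Re_cinner_self: "Re (cinner x x) = (norm x)\<^sup>2"
proof -
  have Re_cnj_mult_self: "Re (cnj z * z) = (cmod z)\<^sup>2" for z
    by (metis Re_complex_of_real complex_norm_square mult.commute)
  have "Re (cinner x x) = (\<Sum>i\<in>UNIV. (cmod (x $ i))\<^sup>2)"
    by (simp only: cinner_def Re_sum Re_cnj_mult_self)
  also have "\<dots> = (norm x)\<^sup>2"
    by (simp add: norm_vec_def L2_set_def sum_nonneg)
  finally show ?thesis .
qed

lemma cinner_add_right: "cinner x (y + z) = cinner x y + cinner x z"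
  by (simp add: cinner_def distrib_left sum.distrib)

lemma cinner_diff_right: "cinner x (y - z) = cinner x y - cinner x z"
  by (simp add: cinner_def right_diff_distrib sum_subtractf)

lemma cinner_scalar_right: "cinner x (c *s y) = c * cinner x y"
  by (simp add: cinner_def sum_distrib_left mult_ac)

lemma cinner_sum_right: "cinner x (\<Sum>j\<in>S. y j) = (\<Sum>j\<in>S. cinner x (y j))"
  unfolding cinner_def by (simp add: sum_component sum_distrib_left) (rule sum.swap)

definition hermitian :: "complex^'n^'n \<Rightarrow> bool" where
  "hermitian A \<longleftrightarrow> hconj A = A"

definition pos_semidef :: "complex^'n^'n \<Rightarrow> bool" where
  "pos_semidef P \<longleftrightarrow> (\<forall>x. 0 \<le> Re (cinner x (P *v x)))"

lemma hermitian_add: "hermitian A \<Longrightarrow> hermitian B \<Longrightarrow> hermitian (A + B)"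
  by (simp add: hermitian_def hconj_add)

lemma hermitian_sum: "(\<And>j. j \<in> S \<Longrightarrow> hermitian (A j)) \<Longrightarrow> hermitian (\<Sum>j\<in>S. A j)"
  by (simp add: hermitian_def hconj_sum)

lemma hermitian_scaleR: "hermitian A \<Longrightarrow> hermitian (r *\<^sub>R A)"
  by (simp add: hermitian_def hconj_scaleR)

lemma hermitian_mat_of_real: "hermitian (mat (complex_of_real r))"
  by (simp add: hermitian_def hconj_mat)

lemma hermitian_gram: "hermitian (A ** hconj A)"
  by (simp add: hermitian_def hconj_matrix_mult)

lemma hermitian_congruence: "hermitian W \<Longrightarrow> hermitian (H ** W ** hconj H)"
  by (simp add: hermitian_def hconj_matrix_mult matrix_mul_assoc)

lemma hermitian_matrix_inv:
  assumes "invertible A" "hermitian A"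
  shows "hermitian (matrix_inv A)"
proof -
  have "hconj (matrix_inv A) ** A = mat 1"
    using arg_cong[OF matrix_inv_right[OF assms(1)], of hconj] assms(2)
    by (simp add: hermitian_def hconj_matrix_mult hconj_mat)
  then have "hconj (matrix_inv A) = matrix_inv A"
    by (metis matrix_inv_right[OF assms(1)] matrix_mul_assoc matrix_mul_lid matrix_mul_rid)
  then show ?thesis
    by (simp add: hermitian_def)
qed

lemma hermitian_det_real: "hermitian A \<Longrightarrow> Im (det A) = 0"
  by (metis hermitian_def det_hconj Reals_cnj_iff complex_is_Real_iff)

lemma pos_semidef_add: "pos_semidef P \<Longrightarrow> pos_semidef Q \<Longrightarrow> pos_semidef (P + Q)"
  by (simp add: pos_semidef_def matrix_vector_mult_add_rdistrib cinner_add_right)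

lemma pos_semidef_sum:
  "(\<And>j. j \<in> S \<Longrightarrow> pos_semidef (P j)) \<Longrightarrow> pos_semidef (\<Sum>j\<in>S. P j)"
proof (induction S rule: infinite_finite_induct)
  case (insert j S)
  then show ?case
    by (simp add: pos_semidef_add)
qed (simp_all add: pos_semidef_def cinner_def)

lemma pos_semidef_scaleR:
  assumes "pos_semidef P" "0 \<le> r"
  shows "pos_semidef (r *\<^sub>R P)"
proof -
  have "(r *\<^sub>R P) *v x = complex_of_real r *s (P *v x)" for x
    by (simp add: vec_eq_iff matrix_vector_mult_def sum_distrib_left) (simp add: scaleR_conv_of_real)
  with assms show ?thesis
    by (simp add: pos_semidef_def cinner_scalar_right)
qed

lemma pos_semidef_gram: "pos_semidef (A ** hconj A)"
proof -
  have "cinner x ((A ** hconj A) *v x) = cinner (hconj A *v x) (hconj A *v x)" for x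
    unfolding matrix_vector_mul_assoc[symmetric] by (rule cinner_adjoint)
  then show ?thesis
    by (simp add: pos_semidef_def Re_cinner_self)
qed

lemma pos_semidef_congruence:
  assumes "pos_semidef W"
  shows "pos_semidef (H ** W ** hconj H)"
proof -
  have "cinner x ((H ** W ** hconj H) *v x) = cinner (hconj H *v x) (W *v (hconj H *v x))" for x
    by (simp add: cinner_adjoint matrix_vector_mul_assoc[symmetric])
  with assms show ?thesis
    by (simp add: pos_semidef_def)
qed

lemma matrix_vector_mult_mat: "mat c *v x = c *s (x::'a::semiring_1^'n)"
  by (vector matrix_vector_mult_def mat_def)
    (simp add: if_distrib if_distribR cong del: if_weak_cong)

lemma invertible_mat_plus_pos_semidef:
  assumes "0 < \<sigma>" "pos_semidef P"
  shows "invertible (mat (complex_of_real \<sigma>) + P)"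
proof -
  let ?M = "mat (complex_of_real \<sigma>) + P"
  have kernel_trivial: "x = 0" if "?M *v x = 0" for x
  proof -
    have "\<sigma> * (norm x)\<^sup>2 + Re (cinner x (P *v x)) = Re (cinner x (?M *v x))"
      by (simp add: matrix_vector_mult_add_rdistrib matrix_vector_mult_mat cinner_add_right
          cinner_scalar_right Re_cinner_self)
    also have "\<dots> = 0"
      using that by (simp add: cinner_def)
    finally have "\<sigma> * (norm x)\<^sup>2 \<le> 0"
      using assms(2) unfolding pos_semidef_def by (metis le_add_same_cancel1)
    then show "x = 0"
      using assms(1) by (simp add: mult_le_0_iff)
  qed
  have "inj ((*v) ?M)"
  proof (rule injI)
    fix x y
    assume "?M *v x = ?M *v y"
    then have "?M *v (x - y) = 0"
      by (simp add: matrix_vector_mult_diff_distrib)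
    then have "x - y = 0"
      by (rule kernel_trivial)
    then show "x = y"
      by simp
  qed
  then show ?thesis
    using det_nz_iff_inj_gen[OF matrix_vector_mul_linear_gen[of ?M]]
    by (simp add: matrix_of_matrix_vector_mul invertible_det_nz)
qed

lemma det_mat_plus_pos_semidef_pos:
  assumes "0 < \<sigma>" "hermitian P" "pos_semidef P"
  shows "0 < Re (det (mat (complex_of_real \<sigma>) + P))"
proof -
  define f where "f s = det (mat (complex_of_real \<sigma>) + s *\<^sub>R P)" for s
  have real: "Im (f s) = 0" for s
    unfolding f_def
    by (intro hermitian_det_real hermitian_add hermitian_mat_of_real hermitian_scaleR assms(2))
  have nonzero: "f s \<noteq> 0" if "0 \<le> s" for s
    using invertible_mat_plus_pos_semidef[OF assms(1) pos_semidef_scaleR[OF assms(3) that]]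
    by (simp add: f_def invertible_det_nz)
  have continuous: "continuous_on {0..1} (\<lambda>s. Re (f s))"
    unfolding f_def det_def by (simp add: continuous_intros)
  have "0 < Re (f 0)"
    using assms(1) by (simp add: f_def det_diagonal mat_def)
  have "0 < Re (f 1)"
  proof (rule ccontr)
    assume "\<not> 0 < Re (f 1)"
    then obtain s where "0 \<le> s" "Re (f s) = 0"
      using IVT2'[OF _ _ _ continuous, of 0] \<open>0 < Re (f 0)\<close> by auto
    then show False
      using nonzero real by (simp add: complex_eq_iff)
  qed
  then show ?thesis
    by (simp add: f_def)
qed

lemma det_expansion_linear_term_mat1:
  fixes X :: "'a::comm_ring_1^'n^'n"
  shows "(\<Sum>p\<in>{p. p permutes (UNIV :: 'n set)}. of_int (sign p) *
           (\<Sum>i\<in>UNIV. X $ i $ p i * (\<Prod>j\<in>UNIV - {i}. (mat 1 :: 'a^'n^'n) $ j $ p j)))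
       = trace X"
proof -
  have "(\<Prod>j\<in>UNIV - {i}. (mat 1 :: 'a^'n^'n) $ j $ p j) = 0"
    if p: "p permutes UNIV" and "p \<noteq> id" for p i
  proof -
    obtain k where k: "p k \<noteq> k"
      using \<open>p \<noteq> id\<close> by (auto simp: fun_eq_iff)
    have "p (p k) \<noteq> p k"
      using k permutes_inj[OF p] by (metis injD)
    then obtain j where "j \<noteq> i" "p j \<noteq> j"
      using k by metis
    then show ?thesis
      by (intro prod_zero) (auto simp: mat_def intro!: bexI[of _ j])
  qed
  then have "(\<Sum>p\<in>{p. p permutes (UNIV :: 'n set)}. of_int (sign p) *
           (\<Sum>i\<in>UNIV. X $ i $ p i * (\<Prod>j\<in>UNIV - {i}. (mat 1 :: 'a^'n^'n) $ j $ p j)))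
      = (\<Sum>p\<in>{p. p permutes (UNIV :: 'n set)}. if p = id then trace X else 0)"
    by (intro sum.cong) (auto simp: sign_id trace_def mat_def)
  then show ?thesis
    by (simp add: sum.delta' permutes_id)
qed

lemma has_derivative_det_at_identity:
  fixes M :: "'a::real_normed_vector \<Rightarrow> 'b::real_normed_field^'n^'n"
  assumes M': "\<And>i j. ((\<lambda>y. M y $ i $ j) has_derivative (\<lambda>h. M' h $ i $ j)) (at x within S)"
    and Mx: "M x = mat 1"
  shows "((\<lambda>y. det (M y)) has_derivative (\<lambda>h. trace (M' h))) (at x within S)"
proof -
  have "((\<lambda>y. det (M y)) has_derivative
      (\<lambda>h. \<Sum>p\<in>{p. p permutes UNIV}. of_int (sign p) *
             (\<Sum>i\<in>UNIV. M' h $ i $ p i * (\<Prod>j\<in>UNIV - {i}. M x $ j $ p j)))) (at x within S)"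
    unfolding det_def by (intro has_derivative_sum has_derivative_mult_right has_derivative_prod M')
  then show ?thesis
    by (simp add: Mx det_expansion_linear_term_mat1)
qed

lemma has_derivative_det:
  fixes M :: "'a::real_normed_vector \<Rightarrow> 'b::real_normed_field^'n^'n"
  assumes M': "\<And>i j. ((\<lambda>y. M y $ i $ j) has_derivative (\<lambda>h. M' h $ i $ j)) (at x within S)"
    and inv: "invertible (M x)"
  shows "((\<lambda>y. det (M y)) has_derivative
           (\<lambda>h. det (M x) * trace (matrix_inv (M x) ** M' h))) (at x within S)"
proof -
  define N where "N y = matrix_inv (M x) ** M y" for y
  have "((\<lambda>y. N y $ i $ j) has_derivative (\<lambda>h. (matrix_inv (M x) ** M' h) $ i $ j))
      (at x within S)" for i j
    unfolding N_def matrix_matrix_mult_def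
    by (simp add: has_derivative_sum has_derivative_mult_right M')
  moreover have "N x = mat 1"
    by (simp add: N_def matrix_inv_left inv)
  ultimately have "((\<lambda>y. det (M x) * det (N y)) has_derivative
      (\<lambda>h. det (M x) * trace (matrix_inv (M x) ** M' h))) (at x within S)"
    by (intro has_derivative_mult_right has_derivative_det_at_identity)
  moreover have "det (M x) * det (N y) = det (M y)" for y
    by (simp add: N_def det_mul[symmetric] matrix_mul_assoc matrix_inv_right inv)
  ultimately show ?thesis
    by simp
qed

lemma logdet_has_derivative:
  fixes M :: "'a::real_normed_vector \<Rightarrow> complex^'n^'n"
  assumes M': "\<And>i j. ((\<lambda>y. M y $ i $ j) has_derivative (\<lambda>h. M' h $ i $ j)) (at x within S)"
    and real: "Im (det (M x)) = 0" and pos: "0 < Re (det (M x))"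
  shows "((\<lambda>y. logdet (M y)) has_derivative
           (\<lambda>h. Re (trace (matrix_inv (M x) ** M' h)))) (at x within S)"
proof -
  have "invertible (M x)"
    using pos by (auto simp: invertible_det_nz)
  note det_derivative = has_derivative_det[OF M' this]
  have "((\<lambda>y. ln (Re (det (M y)))) has_derivative
      (\<lambda>h. Re (det (M x) * trace (matrix_inv (M x) ** M' h)) * inverse (Re (det (M x)))))
      (at x within S)"
    by (rule has_derivative_ln[OF pos has_derivative_Re[OF det_derivative]])
  moreover have "Re (det (M x) * t) * inverse (Re (det (M x))) = Re t" for t
    using real pos by simp
  ultimately show ?thesis
    by (simp add: logdet_def)
qed

lemma matrix_add_rdistrib: "(A + B) ** C = A ** C + B ** (C::'a::semiring_1^'p^'n)"
  by (simp add: vec_eq_iff matrix_matrix_mult_def distrib_right sum.distrib)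

lemma gram_quadratic_expansion:
  "mat s + (H + t *\<^sub>R E) ** W ** hconj (H + t *\<^sub>R E)
   = (mat s + H ** W ** hconj H) + t *\<^sub>R (E ** W ** hconj H + H ** W ** hconj E)
     + t\<^sup>2 *\<^sub>R (E ** W ** hconj E)"
  by (simp add: hconj_add hconj_scaleR matrix_add_ldistrib matrix_add_rdistrib scalar_matrix_assoc
      matrix_scalar_ac scaleR_add_right power2_eq_square add_ac)

lemma chan_add_direction:
  "chan D U G (\<theta> + complex_of_real t *s v) = chan D U G \<theta> + t *\<^sub>R (U ** cdiag v ** G)"
proof -
  have "cdiag (\<theta> + complex_of_real t *s v) = cdiag \<theta> + t *\<^sub>R cdiag v"
    by (simp add: cdiag_def vec_eq_iff scaleR_conv_of_real[where 'a=complex])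
  then show ?thesis
    by (simp add: chan_def matrix_add_ldistrib matrix_add_rdistrib scalar_matrix_assoc
        matrix_scalar_ac)
qed

lemma trace_mult_hconj_cdiag: "trace (X ** hconj (cdiag v)) = cinner v (vecd X)"
proof -
  have "(X ** hconj (cdiag v)) $ i $ i = cnj (v $ i) * X $ i $ i" for i
    by (simp add: matrix_matrix_mult_def hconj_def cdiag_def if_distrib if_distribR sum.delta
        cong: if_cong)
  then show ?thesis
    by (simp add: trace_def cinner_def vecd_def)
qed

lemma Re_trace_symmetrized:
  assumes "hermitian P" "hermitian W"
  shows "Re (trace (P ** (E ** W ** hconj H + H ** W ** hconj E)))
       = 2 * Re (trace (P ** H ** W ** hconj E))"
proof -
  have "trace (P ** (E ** W ** hconj H)) = trace (hconj (H ** W ** hconj E ** P))"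
    using assms by (simp add: hermitian_def hconj_matrix_mult matrix_mul_assoc)
  also have "\<dots> = cnj (trace (P ** H ** W ** hconj E))"
    by (simp add: trace_hconj trace_mul_sym[of _ P] matrix_mul_assoc)
  finally show ?thesis
    by (simp add: matrix_add_ldistrib trace_add matrix_mul_assoc)
qed

lemma logdet_chan_gram_has_real_derivative:
  fixes G :: "complex^'nt^'ns" and U :: "complex^'ns^'nr" and D :: "complex^'nt^'nr"
    and W :: "complex^'nt^'nt"
  assumes "0 < \<sigma>" "hermitian W" "pos_semidef W"
  shows "((\<lambda>t. logdet (mat (complex_of_real \<sigma>)
            + chan D U G (\<theta> + complex_of_real t *s v) ** W
              ** hconj (chan D U G (\<theta> + complex_of_real t *s v))))
         has_real_derivative
           2 * Re (cinner v (vecd (hconj U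
             ** matrix_inv (chan D U G \<theta> ** W ** hconj (chan D U G \<theta>) + mat (complex_of_real \<sigma>))
             ** chan D U G \<theta> ** W ** hconj G)))) (at 0)"
proof -
  define H where "H = chan D U G \<theta>"
  define E where "E = U ** cdiag v ** G"
  define A where "A = mat (complex_of_real \<sigma>) + H ** W ** hconj H"
  define B where "B = E ** W ** hconj H + H ** W ** hconj E"
  define C where "C = E ** W ** hconj E"
  define d where "d = 2 * Re (cinner v (vecd (hconj U ** matrix_inv A ** H ** W ** hconj G)))"
  have path: "mat (complex_of_real \<sigma>) + chan D U G (\<theta> + complex_of_real t *s v) ** W
      ** hconj (chan D U G (\<theta> + complex_of_real t *s v)) = A + t *\<^sub>R B + t\<^sup>2 *\<^sub>R C" for t
    by (simp add: chan_add_direction gram_quadratic_expansion A_def B_def C_def H_def E_def)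
  have A_hermitian: "hermitian A"
    unfolding A_def by (intro hermitian_add hermitian_mat_of_real hermitian_congruence assms(2))
  have A_pos: "0 < Re (det A)"
    unfolding A_def
    by (intro det_mat_plus_pos_semidef_pos assms hermitian_congruence pos_semidef_congruence)
  then have "invertible A"
    by (auto simp: invertible_det_nz)
  have entries: "((\<lambda>t. (A + t *\<^sub>R B + t\<^sup>2 *\<^sub>R C) $ i $ j) has_derivative
      (\<lambda>h. (h *\<^sub>R B) $ i $ j)) (at 0)" for i j
    by (auto intro!: derivative_eq_intros)
  from logdet_has_derivative[OF entries] hermitian_det_real[OF A_hermitian] A_pos
  have "((\<lambda>t. logdet (A + t *\<^sub>R B + t\<^sup>2 *\<^sub>R C)) has_derivative
      (\<lambda>h. Re (trace (matrix_inv A ** (h *\<^sub>R B))))) (at 0)"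
    by simp
  moreover have "Re (trace (matrix_inv A ** (h *\<^sub>R B))) = d * h" for h
  proof -
    have "trace (matrix_inv A ** H ** W ** hconj E)
        = trace ((matrix_inv A ** H ** W ** hconj G ** hconj (cdiag v)) ** hconj U)"
      by (simp add: E_def hconj_matrix_mult matrix_mul_assoc)
    also have "\<dots> = trace (hconj U ** matrix_inv A ** H ** W ** hconj G ** hconj (cdiag v))"
      by (subst trace_mul_sym) (simp add: matrix_mul_assoc)
    finally have trace_E: "trace (matrix_inv A ** H ** W ** hconj E)
        = trace (hconj U ** matrix_inv A ** H ** W ** hconj G ** hconj (cdiag v))" .
    have "Re (trace (matrix_inv A ** B)) = d"
      unfolding B_def d_def trace_mult_hconj_cdiag[symmetric]
      by (simp add: Re_trace_symmetrized hermitian_matrix_inv \<open>invertible A\<close> A_hermitian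
          assms(2) trace_E)
    then show ?thesis
      by (simp add: matrix_scalar_ac scalar_matrix_assoc[symmetric] trace_scaleR)
  qed
  ultimately have "((\<lambda>t. logdet (A + t *\<^sub>R B + t\<^sup>2 *\<^sub>R C)) has_real_derivative d) (at 0)"
    by (simp add: has_field_derivative_def)
  then show ?thesis
    by (simp add: path d_def A_def H_def add.commute)
qed

lemma has_complex_gradientI:
  assumes "\<And>v. ((\<lambda>t. f (\<theta> + complex_of_real t *s v)) has_real_derivative
                    2 * Re (cinner v g)) (at 0)"
  shows "has_complex_gradient f g \<theta>"
proof -
  have "cinner (axis i 1) g = g $ i" "cinner (\<i> *s axis i 1) g = - \<i> * g $ i" for i
    by (simp_all add: cinner_def axis_def if_distrib if_distribR sum.delta cong: if_cong)
  then have
    "((\<lambda>t. f (\<theta> + complex_of_real t *s axis i 1)) has_real_derivative 2 * Re (g $ i)) (at 0)"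
    "((\<lambda>t. f (\<theta> + (\<i> * complex_of_real t) *s axis i 1)) has_real_derivative 2 * Im (g $ i)) (at 0)"
    for i
    using assms[of "axis i 1"] assms[of "\<i> *s axis i 1"]
    by (simp_all add: vector_smult_assoc mult.commute)
  moreover have "g $ i = Complex (2 * Re (g $ i)) (2 * Im (g $ i)) / 2" for i
    by (simp add: complex_eq_iff)
  ultimately show ?thesis
    unfolding has_complex_gradient_def by blast
qed

theorem theorem3:
  fixes G :: "complex^'nt^'ns"
    and U :: "'k::finite \<Rightarrow> complex^'ns^'nr"
    and D :: "'k \<Rightarrow> complex^'nt^'nr"
    and W :: "'k \<Rightarrow> complex^'nd^'nt"
    and \<omega> :: "'k \<Rightarrow> real"
    and \<sigma>2 :: real
    and \<theta> :: "complex^'ns"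
  assumes "\<sigma>2 > 0"
  shows "has_complex_gradient (wsr \<omega> \<sigma>2 G U D W)
     (\<Sum>k\<in>UNIV. complex_of_real (\<omega> k) *s
        (vecd (hconj (U k)
               ** matrix_inv (chan (D k) (U k) G \<theta> ** Wbar W ** hconj (chan (D k) (U k) G \<theta>)
                              + mat (complex_of_real \<sigma>2))
               ** chan (D k) (U k) G \<theta> ** Wbar W ** hconj G)
       - vecd (hconj (U k)
               ** matrix_inv (chan (D k) (U k) G \<theta> ** Wbar_ex W k ** hconj (chan (D k) (U k) G \<theta>)
                              + mat (complex_of_real \<sigma>2))
               ** chan (D k) (U k) G \<theta> ** Wbar_ex W k ** hconj G)))
     \<theta>"
proof -
  have covariances: "hermitian (Wbar W)" "pos_semidef (Wbar W)"
    "hermitian (Wbar_ex W k)" "pos_semidef (Wbar_ex W k)" for k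
    unfolding Wbar_def Wbar_ex_def
    by (intro hermitian_sum hermitian_gram pos_semidef_sum pos_semidef_gram)+
  have directional_derivative_split:
    "2 * Re (cinner v (\<Sum>k\<in>UNIV. complex_of_real (\<omega> k) *s (x k - y k)))
     = (\<Sum>k\<in>UNIV. \<omega> k * (2 * Re (cinner v (x k)) - 2 * Re (cinner v (y k))))" for v x y
    by (simp add: cinner_sum_right cinner_scalar_right cinner_diff_right Re_sum sum_distrib_left
        algebra_simps)
  show ?thesis
    unfolding wsr_def
    by (intro has_complex_gradientI, unfold directional_derivative_split)
      (intro DERIV_sum DERIV_cmult DERIV_diff logdet_chan_gram_has_real_derivative assms covariances)
qed

end
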